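(* Let $X$ be a real Banach space with $\dim X\ge 2$. Then $J(X)\,S_P(X)\ge C'_{NJ}(X)-1$.
   Context: For a real Banach space $X$ with unit sphere $S_X$, the P-angle constant is $S_P(X)=\sup\left\{\frac{\|x+y\|^2+\|x-y\|^2-4}{2\|x+y\|\,\|x-y\|}: x,y\in S_X,\ x\neq \pm y\right\}$. The James constant is $J(X)=\sup\{\min\{\|x+y\|,\|x-y\|\}: x,y\in S_X\}$, and the modified von Neumann–Jordan constant is $C'_{NJ}(X)=\sup\left\{\frac{\|x+y\|^2+\|x-y\|^2}{4}: x,y\in S_X\right\}$. *)

theory Defs
  imports "HOL-Analysis.Analysis"
begin

definition unit_sphere :: "'a::real_normed_vector set" where
  "unit_sphere = {x. norm x = 1}"

definition P_angle_const :: "'a::real_normed_vector itself \<Rightarrow> real" where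
  "P_angle_const _ = Sup {(norm (x + y) ^ 2 + norm (x - y) ^ 2 - 4) / (2 * norm (x + y) * norm (x - y)) | x y :: 'a.
      x \<in> unit_sphere \<and> y \<in> unit_sphere \<and> x \<noteq> y \<and> x \<noteq> - y}"

definition James_const :: "'a::real_normed_vector itself \<Rightarrow> real" where
  "James_const _ = Sup {min (norm (x + y)) (norm (x - y)) | x y :: 'a.
      x \<in> unit_sphere \<and> y \<in> unit_sphere}"

definition modified_vNJ_const :: "'a::real_normed_vector itself \<Rightarrow> real" where
  "modified_vNJ_const _ = Sup {(norm (x + y) ^ 2 + norm (x - y) ^ 2) / 4 | x y :: 'a.
      x \<in> unit_sphere \<and> y \<in> unit_sphere}"

end

theory Submission imports Defs begin

text \<open>For unit vectors put \<open>a = \<parallel>x + y\<parallel>\<close>, \<open>b = \<parallel>x - y\<parallel>\<close>, so \<open>a, b \<le> 2\<close>.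
  If \<open>a\<^sup>2 + b\<^sup>2 > 4\<close> then \<open>x \<noteq> \<plusminus>y\<close>, and since \<open>a b \<le> 2 min a b\<close> we get
  \<open>(a\<^sup>2 + b\<^sup>2)/4 - 1 \<le> min a b \<cdot> (a\<^sup>2 + b\<^sup>2 - 4)/(2ab) \<le> J(X) S\<^sub>P(X)\<close>; otherwise
  \<open>(a\<^sup>2 + b\<^sup>2)/4 - 1 \<le> 0 \<le> J(X) S\<^sub>P(X)\<close>. The nonnegativity of \<open>S\<^sub>P(X)\<close> is where
  \<open>dim X \<ge> 2\<close> enters: by the intermediate value theorem there are unit vectors with
  \<open>\<parallel>x + y\<parallel> = \<parallel>x - y\<parallel> = a\<close>, and either they or \<open>(x \<plusminus> y)/a\<close> give a nonnegative quotient.\<close>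

lemma unit_norm_add_diff_le_2:
  fixes x y :: "'a::real_normed_vector"
  assumes "norm x = 1" "norm y = 1"
  shows "norm (x + y) \<le> 2" "norm (x - y) \<le> 2"
  using norm_triangle_ineq[of x y] norm_triangle_ineq4[of x y] assms by auto

lemma P_angle_quotient_le_half:
  fixes x y :: "'a::real_normed_vector"
  assumes "norm x = 1" "norm y = 1" "x \<noteq> y" "x \<noteq> - y"
  shows "(norm (x + y) ^ 2 + norm (x - y) ^ 2 - 4) / (2 * norm (x + y) * norm (x - y)) \<le> 1/2"
proof -
  define a b where "a = norm (x + y)" and "b = norm (x - y)"
  have "a \<le> 2" "b \<le> 2" using unit_norm_add_diff_le_2[OF assms(1,2)] by (auto simp: a_def b_def)
  moreover have "a > 0" "b > 0" using assms(3,4) by (auto simp: a_def b_def add_eq_0_iff)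
  ultimately have "a^2 \<le> 4" "b^2 \<le> 4" "a * a \<le> a * b \<or> b * b \<le> a * b"
    using power_mono[of a 2 2] power_mono[of b 2 2] linorder_class.le_cases[of a b]
    by (auto intro: mult_left_mono mult_right_mono)
  then have "a^2 + b^2 - 4 \<le> a * b" by (auto simp: power2_eq_square)
  with \<open>a > 0\<close> \<open>b > 0\<close> show ?thesis by (simp add: divide_le_eq a_def b_def)
qed

lemma P_angle_const_upper:
  fixes x y :: "'a::real_normed_vector"
  assumes "norm x = 1" "norm y = 1" "x \<noteq> y" "x \<noteq> - y"
  shows "(norm (x + y) ^ 2 + norm (x - y) ^ 2 - 4) / (2 * norm (x + y) * norm (x - y))
           \<le> P_angle_const TYPE('a)"
  unfolding P_angle_const_def
proof (rule cSup_upper)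
  show "bdd_above {(norm (x + y) ^ 2 + norm (x - y) ^ 2 - 4) / (2 * norm (x + y) * norm (x - y))
      | x y :: 'a. x \<in> unit_sphere \<and> y \<in> unit_sphere \<and> x \<noteq> y \<and> x \<noteq> - y}"
    unfolding unit_sphere_def by (rule bdd_aboveI[where M="1/2"]) (blast intro: P_angle_quotient_le_half)
qed (use assms in \<open>auto simp: unit_sphere_def\<close>)

lemma James_const_upper:
  fixes x y :: "'a::real_normed_vector"
  assumes "norm x = 1" "norm y = 1"
  shows "min (norm (x + y)) (norm (x - y)) \<le> James_const TYPE('a)"
  unfolding James_const_def
proof (rule cSup_upper)
  show "bdd_above {min (norm (x + y)) (norm (x - y)) | x y :: 'a. x \<in> unit_sphere \<and> y \<in> unit_sphere}"
    by (rule bdd_aboveI[where M=2])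
      (auto simp: unit_sphere_def dest: unit_norm_add_diff_le_2 intro: min.coboundedI1)
qed (use assms in \<open>auto simp: unit_sphere_def\<close>)

lemma James_const_nonneg:
  fixes x :: "'a::real_normed_vector"
  assumes "norm x = 1"
  shows "0 \<le> James_const TYPE('a)"
  using James_const_upper[OF assms assms] by simp

lemma obtain_independent_pair:
  assumes "\<exists>B :: 'a::real_vector set. independent B \<and> card B = 2"
  obtains p q :: "'a::real_vector" where "\<And>c d. c *\<^sub>R p + d *\<^sub>R q = 0 \<Longrightarrow> c = 0 \<and> d = 0"
proof -
  obtain p q :: 'a where "independent {p, q}" "p \<noteq> q"
    using assms by (metis card_2_iff)
  then have "q \<noteq> 0" and p_notin: "p \<notin> span {q}" by (auto simp: independent_insert)
  have "c = 0 \<and> d = 0" if sum0: "c *\<^sub>R p + d *\<^sub>R q = 0" for c d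
  proof (cases "c = 0")
    case True
    with sum0 \<open>q \<noteq> 0\<close> show ?thesis by simp
  next
    case False
    from sum0 have "c *\<^sub>R p = - (d *\<^sub>R q)" by (simp add: eq_neg_iff_add_eq_0)
    then have "(1/c) *\<^sub>R (c *\<^sub>R p) = (1/c) *\<^sub>R (- (d *\<^sub>R q))" by simp
    with False have "p = (- d / c) *\<^sub>R q" by simp
    then have "p \<in> span {q}" unfolding span_singleton by (metis rangeI)
    with p_notin show ?thesis by simp
  qed
  then show ?thesis using that by blast
qed

text \<open>Rotating \<open>x\<close> to \<open>-x\<close> along the normalised path \<open>(1 - 2t) x + (t - t\<^sup>2) q\<close>,
  the continuous function \<open>\<parallel>x + w\<parallel> - \<parallel>x - w\<parallel>\<close> goes from \<open>2\<close> to \<open>-2\<close>.\<close>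

lemma obtain_James_orthogonal_unit_pair:
  fixes p q :: "'a::real_normed_vector"
  assumes indep: "\<And>c d. c *\<^sub>R p + d *\<^sub>R q = 0 \<Longrightarrow> c = 0 \<and> d = 0"
  obtains x y :: 'a where "norm x = 1" "norm y = 1" "norm (x + y) = norm (x - y)"
proof -
  have "p \<noteq> 0" using indep[of 1 0] by auto
  define x where "x = p /\<^sub>R norm p"
  have norm_x: "norm x = 1" using \<open>p \<noteq> 0\<close> by (simp add: x_def)
  define w where "w t = (1 - 2*t) *\<^sub>R x + (t - t^2) *\<^sub>R q" for t :: real
  have w_nonzero: "w t \<noteq> 0" for t
  proof
    assume "w t = 0"
    then have "((1 - 2*t) / norm p) *\<^sub>R p + (t - t^2) *\<^sub>R q = 0"
      by (simp add: w_def x_def divide_inverse_commute mult.commute)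
    from indep[OF this] \<open>p \<noteq> 0\<close> have "1 - 2*t = 0" "t - t^2 = 0" by auto
    then show False by (simp add: power2_eq_square algebra_simps)
  qed
  define f where "f t = norm (x + w t /\<^sub>R norm (w t)) - norm (x - w t /\<^sub>R norm (w t))" for t
  have "continuous_on {0..1} f"
    unfolding f_def w_def using w_nonzero[unfolded w_def] by (intro continuous_intros) auto
  moreover have "f 0 = 2" "f 1 = -2" using norm_x by (simp_all add: f_def w_def flip: scaleR_2)
  ultimately obtain t where "f t = 0" using IVT2'[of f 1 0 0] by force
  moreover have "norm (w t /\<^sub>R norm (w t)) = 1" using w_nonzero[of t] by simp
  ultimately show ?thesis using that[of x "w t /\<^sub>R norm (w t)"] norm_x by (simp add: f_def)
qed

lemma P_angle_const_nonneg:
  fixes x y :: "'a::real_normed_vector"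
  assumes norm_x: "norm x = 1" and norm_y: "norm y = 1" and orth: "norm (x + y) = norm (x - y)"
  shows "0 \<le> P_angle_const TYPE('a)"
proof -
  define a where "a = norm (x + y)"
  have "a > 0"
  proof (rule ccontr)
    assume "\<not> a > 0"
    then have "(x + y) + (x - y) = 0" using orth by (auto simp: a_def)
    then have "x = 0" by (simp flip: scaleR_2)
    with norm_x show False by simp
  qed
  have "\<exists>u v :: 'a. norm u = 1 \<and> norm v = 1 \<and> u \<noteq> v \<and> u \<noteq> - v
                   \<and> 4 \<le> norm (u + v) ^ 2 + norm (u - v) ^ 2"
  proof (cases "2 \<le> a^2")
    case True
    with \<open>a > 0\<close> orth norm_x norm_y show ?thesis
      by (intro exI[of _ x] exI[of _ y]) (auto simp: a_def)
  next
    case False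
    define u v where "u = (x + y) /\<^sub>R a" and "v = (x - y) /\<^sub>R a"
    have "u + v = (2 / a) *\<^sub>R x" "u - v = (2 / a) *\<^sub>R y"
      by (simp_all add: u_def v_def divide_inverse algebra_simps flip: scaleR_2)
    then have "norm (u + v) = 2 / a" "norm (u - v) = 2 / a"
      using norm_x norm_y \<open>a > 0\<close> by simp_all
    moreover have "4 \<le> 8 / a^2" using False \<open>a > 0\<close> by (simp add: le_divide_eq)
    moreover have "norm u = 1" "norm v = 1" using \<open>a > 0\<close> orth by (simp_all add: u_def v_def a_def)
    ultimately show ?thesis using \<open>a > 0\<close>
      by (intro exI[of _ u] exI[of _ v]) (auto simp: power_divide)
  qed
  then obtain u v :: 'a where uv: "norm u = 1" "norm v = 1" "u \<noteq> v" "u \<noteq> - v"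
    and sum_sq: "4 \<le> norm (u + v) ^ 2 + norm (u - v) ^ 2" by blast
  have "0 \<le> (norm (u + v) ^ 2 + norm (u - v) ^ 2 - 4) / (2 * norm (u + v) * norm (u - v))"
    using sum_sq by (intro divide_nonneg_nonneg) auto
  also have "\<dots> \<le> P_angle_const TYPE('a)" using P_angle_const_upper[OF uv] .
  finally show ?thesis .
qed

lemma P_angle_quotient_mult_min_ge:
  fixes a b :: real
  assumes "0 < a" "0 < b" "a \<le> 2" "b \<le> 2" "4 \<le> a^2 + b^2"
  shows "(a^2 + b^2 - 4) / 4 \<le> min a b * ((a^2 + b^2 - 4) / (2 * a * b))"
proof -
  have "a * b \<le> 2 * min a b"
    using assms(1-4) by (auto simp: min_def intro: mult_left_mono mult_right_mono)
  then have "1 / 4 \<le> min a b / (2 * a * b)" using assms(1,2) by (simp add: field_simps)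
  from mult_left_mono[OF this, of "a^2 + b^2 - 4"] assms(5) show ?thesis by simp
qed

lemma vNJ_quotient_le:
  fixes x y :: "'a::real_normed_vector"
  assumes norm_x: "norm x = 1" and norm_y: "norm y = 1" and S_nonneg: "0 \<le> P_angle_const TYPE('a)"
  shows "(norm (x + y) ^ 2 + norm (x - y) ^ 2) / 4
           \<le> James_const TYPE('a) * P_angle_const TYPE('a) + 1"
proof -
  define a b where "a = norm (x + y)" and "b = norm (x - y)"
  define J S where "J = James_const TYPE('a)" and "S = P_angle_const TYPE('a)"
  have "0 \<le> J" using James_const_nonneg[OF norm_x] by (simp add: J_def)
  show ?thesis
  proof (cases "a^2 + b^2 \<le> 4")
    case True
    moreover have "0 \<le> J * S" using \<open>0 \<le> J\<close> S_nonneg by (simp add: S_def)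
    ultimately show ?thesis by (simp add: a_def b_def J_def S_def)
  next
    case False
    have "- y - y = - (2 *\<^sub>R y)" by (simp add: scaleR_2)
    then have "x \<noteq> y" "x \<noteq> - y"
      using False norm_x norm_y by (auto simp: a_def b_def simp flip: scaleR_2)
    then have "a > 0" "b > 0" by (auto simp: a_def b_def add_eq_0_iff)
    have "a \<le> 2" "b \<le> 2" using unit_norm_add_diff_le_2[OF norm_x norm_y] by (auto simp: a_def b_def)
    have quotient_le: "(a^2 + b^2 - 4) / (2 * a * b) \<le> S"
      using P_angle_const_upper[OF norm_x norm_y \<open>x \<noteq> y\<close> \<open>x \<noteq> - y\<close>] by (simp add: a_def b_def S_def)
    have min_le: "min a b \<le> J" using James_const_upper[OF norm_x norm_y] by (simp add: a_def b_def J_def)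
    have "(a^2 + b^2 - 4) / 4 \<le> min a b * ((a^2 + b^2 - 4) / (2 * a * b))"
      using P_angle_quotient_mult_min_ge \<open>a > 0\<close> \<open>b > 0\<close> \<open>a \<le> 2\<close> \<open>b \<le> 2\<close> False by simp
    also have "\<dots> \<le> J * S"
      using quotient_le min_le \<open>0 \<le> J\<close> \<open>a > 0\<close> \<open>b > 0\<close> False by (intro mult_mono) auto
    finally show ?thesis by (simp add: a_def b_def J_def S_def field_simps)
  qed
qed

theorem mainTheorem5:
  assumes "\<exists>B :: 'a::banach set. independent B \<and> card B = 2"
  shows "James_const TYPE('a) * P_angle_const TYPE('a) \<ge> modified_vNJ_const TYPE('a) - 1"
proof -
  obtain p q :: 'a where indep: "\<And>c d. c *\<^sub>R p + d *\<^sub>R q = 0 \<Longrightarrow> c = 0 \<and> d = 0"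
    using obtain_independent_pair[OF assms] by blast
  obtain x y :: 'a where "norm x = 1" "norm y = 1" "norm (x + y) = norm (x - y)"
    using obtain_James_orthogonal_unit_pair[OF indep] by blast
  then have S_nonneg: "0 \<le> P_angle_const TYPE('a)" by (rule P_angle_const_nonneg)
  have "modified_vNJ_const TYPE('a) \<le> James_const TYPE('a) * P_angle_const TYPE('a) + 1"
    unfolding modified_vNJ_const_def
  proof (rule cSup_least)
    show "{(norm (x + y) ^ 2 + norm (x - y) ^ 2) / 4 | x y :: 'a.
            x \<in> unit_sphere \<and> y \<in> unit_sphere} \<noteq> {}"
      using \<open>norm x = 1\<close> unfolding unit_sphere_def by blast
  qed (unfold unit_sphere_def, blast intro: vNJ_quotient_le[OF _ _ S_nonneg])
  then show ?thesis by simp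
qed

end
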